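(* Let $G_1,G_2$ be cubic graphs. Every proper $3$-edge coloring $f$ of $G=G_1\,Y\,G_2$ (respectively $G=G_1\,H\,G_2$) can be written as $c_1\,Y\,d_1$ (respectively $c_1\,H\,d_1$), where $c_1$ is some proper $3$-edge coloring of $G_1$ and $d_1$ is some proper $3$-edge coloring of $G_2$.
   Context: Graphs are finite; multiple edges allowed, loops not. Proper $3$-edge colorings use colors $\{1,2,3\}$, adjacent edges receiving different colors. Composition Y: choose $v_1\in G_1$ with incident edges $x_j=v_1s_{1j}$ and $v_2\in G_2$ with incident edges $y_j=v_2s_{2j}$ ($j=1,2,3$); $G_1\,Y\,G_2$ deletes $v_1,v_2$ and adds edges $s_{1j}s_{2j}$ (the edge obtained by identifying $x_j$ with $y_j$). Composition H: choose edges $x=s_{11}s_{12}\in G_1$, $y=s_{21}s_{22}\in G_2$; $G_1\,H\,G_2$ deletes $x,y$ and adds $s_{11}s_{21},s_{12}s_{22}$. For proper $3$-edge colorings $c$ of $G_1$ and $d$ of $G_2$: let $\hat d$ be a coloring of $G_2$ obtained from $d$ by a global permutation of colors such that $\hat d(y_j)=c(x_j)$ for $j=1,2,3$; then $c\,Y\,d$ colors edges of $G_1-v_1$ by $c$, edges of $G_2-v_2$ by $\hat d$, and the edge $s_{1j}s_{2j}$ by $c(x_j)=\hat d(y_j)$. Similarly let $\tilde d$ be obtained from $d$ by a global color permutation with $\tilde d(y)=c(x)$; then $c\,H\,d$ colors edges of $G_1-x$ by $c$, edges of $G_2-y$ by $\tilde d$, and both new edges by $c(x)=\tilde d(y)$.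 *)

theory Defs
  imports Main
begin

text \<open>Finite multigraphs without loops: a vertex set, an edge set (edge identities,
  so parallel edges are allowed) and for each edge its set of two distinct ends.\<close>

record ('v, 'e) mgraph =
  verts :: "'v set"
  edges :: "'e set"
  ends  :: "'e \<Rightarrow> 'v set"

definition wf_graph :: "('v, 'e) mgraph \<Rightarrow> bool" where
  "wf_graph G \<longleftrightarrow> finite (verts G) \<and> finite (edges G) \<and>
     (\<forall>e \<in> edges G. ends G e \<subseteq> verts G \<and> card (ends G e) = 2)"

definition incident :: "('v, 'e) mgraph \<Rightarrow> 'v \<Rightarrow> 'e set" where
  "incident G v = {e \<in> edges G. v \<in> ends G e}"

definition cubic :: "('v, 'e) mgraph \<Rightarrow> bool" where
  "cubic G \<longleftrightarrow> wf_graph G \<and> (\<forall>v \<in> verts G. card (incident G v) = 3)"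

definition proper3 :: "('v, 'e) mgraph \<Rightarrow> ('e \<Rightarrow> nat) \<Rightarrow> bool" where
  "proper3 G c \<longleftrightarrow> (\<forall>e \<in> edges G. c e \<in> {1,2,3}) \<and>
     (\<forall>e \<in> edges G. \<forall>e' \<in> edges G. e \<noteq> e' \<and> ends G e \<inter> ends G e' \<noteq> {} \<longrightarrow> c e \<noteq> c e')"

definition other :: "('v, 'e) mgraph \<Rightarrow> 'e \<Rightarrow> 'v \<Rightarrow> 'v" where
  "other G e v = (THE u. ends G e = {v, u})"

definition Y_data :: "('v, 'e) mgraph \<Rightarrow> 'v \<Rightarrow> 'e \<Rightarrow> 'e \<Rightarrow> 'e \<Rightarrow> bool" where
  "Y_data G v x1 x2 x3 \<longleftrightarrow> v \<in> verts G \<and> x1 \<noteq> x2 \<and> x1 \<noteq> x3 \<and> x2 \<noteq> x3 \<and>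
     incident G v = {x1, x2, x3}"

text \<open>G1 Y G2: delete v1, v2; the edge x_j of G1 (identified with y_j of G2) now joins
  s_1j and s_2j.  Vertices/edges of G1 are tagged Inl, those of G2 Inr.\<close>
definition Y_comp ::
  "('v1, 'e1) mgraph \<Rightarrow> 'v1 \<Rightarrow> 'e1 \<Rightarrow> 'e1 \<Rightarrow> 'e1 \<Rightarrow>
   ('v2, 'e2) mgraph \<Rightarrow> 'v2 \<Rightarrow> 'e2 \<Rightarrow> 'e2 \<Rightarrow> 'e2 \<Rightarrow> ('v1 + 'v2, 'e1 + 'e2) mgraph" where
  "Y_comp G1 v1 x1 x2 x3 G2 v2 y1 y2 y3 =
    \<lparr> verts = Inl ` (verts G1 - {v1}) \<union> Inr ` (verts G2 - {v2}),
      edges = Inl ` edges G1 \<union> Inr ` (edges G2 - {y1, y2, y3}),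
      ends = (\<lambda>e. case e of
                 Inl a \<Rightarrow>
                   (if a = x1 then {Inl (other G1 x1 v1), Inr (other G2 y1 v2)}
                    else if a = x2 then {Inl (other G1 x2 v1), Inr (other G2 y2 v2)}
                    else if a = x3 then {Inl (other G1 x3 v1), Inr (other G2 y3 v2)}
                    else Inl ` ends G1 a)
               | Inr b \<Rightarrow> Inr ` ends G2 b) \<rparr>"

definition H_data :: "('v, 'e) mgraph \<Rightarrow> 'e \<Rightarrow> 'v \<Rightarrow> 'v \<Rightarrow> bool" where
  "H_data G x s1 s2 \<longleftrightarrow> x \<in> edges G \<and> s1 \<noteq> s2 \<and> ends G x = {s1, s2}"

text \<open>G1 H G2: delete x = s11 s12 and y = s21 s22, add s11 s21 (represented by Inl x)
  and s12 s22 (represented by Inr y).\<close>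
definition H_comp ::
  "('v1, 'e1) mgraph \<Rightarrow> 'e1 \<Rightarrow> 'v1 \<Rightarrow> 'v1 \<Rightarrow>
   ('v2, 'e2) mgraph \<Rightarrow> 'e2 \<Rightarrow> 'v2 \<Rightarrow> 'v2 \<Rightarrow> ('v1 + 'v2, 'e1 + 'e2) mgraph" where
  "H_comp G1 x s11 s12 G2 y s21 s22 =
    \<lparr> verts = Inl ` verts G1 \<union> Inr ` verts G2,
      edges = Inl ` edges G1 \<union> Inr ` edges G2,
      ends = (\<lambda>e. case e of
                 Inl a \<Rightarrow> (if a = x then {Inl s11, Inr s21} else Inl ` ends G1 a)
               | Inr b \<Rightarrow> (if b = y then {Inl s12, Inr s22} else Inr ` ends G2 b)) \<rparr>"

definition is_Y_coloring ::
  "('v1, 'e1) mgraph \<Rightarrow> 'v1 \<Rightarrow> 'e1 \<Rightarrow> 'e1 \<Rightarrow> 'e1 \<Rightarrow>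
   ('v2, 'e2) mgraph \<Rightarrow> 'v2 \<Rightarrow> 'e2 \<Rightarrow> 'e2 \<Rightarrow> 'e2 \<Rightarrow>
   ('e1 \<Rightarrow> nat) \<Rightarrow> ('e2 \<Rightarrow> nat) \<Rightarrow> ('e1 + 'e2 \<Rightarrow> nat) \<Rightarrow> bool" where
  "is_Y_coloring G1 v1 x1 x2 x3 G2 v2 y1 y2 y3 c d f \<longleftrightarrow>
    (\<exists>\<pi>. bij_betw \<pi> {1,2,3} {1,2,3} \<and>
       \<pi> (d y1) = c x1 \<and> \<pi> (d y2) = c x2 \<and> \<pi> (d y3) = c x3 \<and>
       (\<forall>e \<in> edges (Y_comp G1 v1 x1 x2 x3 G2 v2 y1 y2 y3).
          f e = (case e of Inl a \<Rightarrow> c a | Inr b \<Rightarrow> \<pi> (d b))))"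

definition is_H_coloring ::
  "('v1, 'e1) mgraph \<Rightarrow> 'e1 \<Rightarrow> 'v1 \<Rightarrow> 'v1 \<Rightarrow>
   ('v2, 'e2) mgraph \<Rightarrow> 'e2 \<Rightarrow> 'v2 \<Rightarrow> 'v2 \<Rightarrow>
   ('e1 \<Rightarrow> nat) \<Rightarrow> ('e2 \<Rightarrow> nat) \<Rightarrow> ('e1 + 'e2 \<Rightarrow> nat) \<Rightarrow> bool" where
  "is_H_coloring G1 x s11 s12 G2 y s21 s22 c d f \<longleftrightarrow>
    (\<exists>\<pi>. bij_betw \<pi> {1,2,3} {1,2,3} \<and> \<pi> (d y) = c x \<and>
       (\<forall>e \<in> edges (H_comp G1 x s11 s12 G2 y s21 s22).
          f e = (case e of Inl a \<Rightarrow> c a | Inr b \<Rightarrow> \<pi> (d b))))"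

end

theory Submission
  imports Defs
begin

text \<open>Parity lemma: if f properly 3-edge-colours a graph and every vertex of a set A has
  degree at least 3, then for each colour i the number of i-coloured edges with exactly one end
  in A has the parity of |A|. For A = V(G1) - v1 in G1 Y G2 these edges are the three merged
  edges, so all three colour counts are odd and the merged edges get distinct colours; for
  A = V(G1) in G1 H G2 they are the two new edges, so both get the same colour. Hence f
  restricted to either side, with the merged (new) edges standing in for the deleted ones,
  is a proper colouring of G1 and of G2, and the colour permutation can be taken to be the
  identity.\<close>

lemma ends_eq_other:
  assumes "card (ends G e) = 2" "v \<in> ends G e"
  shows "ends G e = {v, other G e v}" "other G e v \<noteq> v"
proof -
  obtain u where u: "ends G e = {v, u}" "u \<noteq> v"
    using assms by (auto simp: card_2_iff doubleton_eq_iff)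
  have "other G e v = u"
    unfolding other_def using u by (intro the_equality) (auto simp: doubleton_eq_iff)
  then show "ends G e = {v, other G e v}" "other G e v \<noteq> v"
    using u by auto
qed

lemma proper3_iff_inj_on_incident:
  "proper3 G c \<longleftrightarrow> (\<forall>e \<in> edges G. c e \<in> {1,2,3}) \<and> (\<forall>w. inj_on c (incident G w))"
  unfolding proper3_def incident_def inj_on_def by blast

lemma proper3_colour_unique_at_vertex:
  assumes "finite (edges G)" "proper3 G f" "3 \<le> card (incident G v)" "i \<in> {1,2,3}"
  shows "card {e \<in> edges G. f e = i \<and> v \<in> ends G e} = 1"
proof -
  have inj: "inj_on f (incident G v)" and range: "f ` incident G v \<subseteq> {1,2,3}"
    using assms(2) by (auto simp: proper3_iff_inj_on_incident incident_def)
  then have "f ` incident G v = {1,2,3}"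
    using assms(3) by (intro card_seteq) (auto simp: card_image)
  then obtain e where e: "e \<in> incident G v" "f e = i"
    using assms(4) by (metis imageE)
  then have "{e \<in> edges G. f e = i \<and> v \<in> ends G e} = {e}"
    using inj by (auto simp: incident_def inj_on_def)
  then show ?thesis by simp
qed

definition boundary :: "('v, 'e) mgraph \<Rightarrow> 'v set \<Rightarrow> 'e set" where
  "boundary G A = {e \<in> edges G. odd (card (ends G e \<inter> A))}"

text \<open>Each vertex of A meets exactly one i-coloured edge, so double counting the pairs (v, e)
  with v \<in> A an end of an i-coloured edge e gives the parity lemma.\<close>
lemma even_card_iff_even_boundary_colour_classes:
  assumes "finite (edges G)" "finite A" "proper3 G f" "\<forall>v \<in> A. 3 \<le> card (incident G v)"
  shows "\<forall>i \<in> {1,2,3}. even (card A) \<longleftrightarrow> even (card {e \<in> boundary G A. f e = i})"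
proof
  fix i :: nat assume i: "i \<in> {1,2,3}"
  let ?E = "{e \<in> edges G. f e = i}"
  have "card A = (\<Sum>v\<in>A. card {e \<in> edges G. f e = i \<and> v \<in> ends G e})"
    using proper3_colour_unique_at_vertex[OF assms(1,3) _ i] assms(4) by simp
  also have "\<dots> = (\<Sum>v\<in>A. \<Sum>e\<in>?E. if v \<in> ends G e then 1 else 0)"
    using assms(1) by (intro sum.cong refl) (simp add: sum.If_cases Int_def conj_commute conj_left_commute)
  also have "\<dots> = (\<Sum>e\<in>?E. \<Sum>v\<in>A. if v \<in> ends G e then 1 else 0)"
    by (rule sum.swap)
  also have "\<dots> = (\<Sum>e\<in>?E. card (ends G e \<inter> A))"
    using assms(2) by (intro sum.cong refl) (simp add: sum.If_cases Int_def conj_commute)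
  finally have "even (card A) \<longleftrightarrow> even (card {e \<in> ?E. odd (card (ends G e \<inter> A))})"
    using assms(1) by (simp add: even_sum_iff)
  moreover have "{e \<in> ?E. odd (card (ends G e \<inter> A))} = {e \<in> boundary G A. f e = i}"
    by (auto simp: boundary_def)
  ultimately show "even (card A) \<longleftrightarrow> even (card {e \<in> boundary G A. f e = i})" by simp
qed

lemma card_filter_three:
  assumes "e1 \<noteq> e2" "e1 \<noteq> e3" "e2 \<noteq> e3"
  shows "card {e \<in> {e1, e2, e3}. P e} =
    (if P e1 then 1 else 0) + (if P e2 then 1 else 0) + (if P e3 then 1 else 0)"
proof -
  have "card {e \<in> {e1, e2, e3}. P e} = (\<Sum>e\<in>{e1, e2, e3}. if P e then 1 else 0)"
    by (simp add: sum.If_cases Int_def)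
  then show ?thesis using assms by simp
qed

lemma card_filter_two:
  assumes "e1 \<noteq> e2"
  shows "card {e \<in> {e1, e2}. P e} = (if P e1 then 1 else 0) + (if P e2 then 1 else 0)"
proof -
  have "card {e \<in> {e1, e2}. P e} = (\<Sum>e\<in>{e1, e2}. if P e then 1 else 0)"
    by (simp add: sum.If_cases Int_def)
  then show ?thesis using assms by simp
qed

text \<open>If three (two) edges meet every colour class in the same parity, that parity is odd
  (even), which forces three distinct colours (one common colour).\<close>
lemma colours_distinct_of_parity:
  assumes "e1 \<noteq> e2" "e1 \<noteq> e3" "e2 \<noteq> e3" "f ` {e1, e2, e3} \<subseteq> {1,2,3::nat}"
    and "\<forall>i \<in> {1,2,3}. even n \<longleftrightarrow> even (card {e \<in> {e1, e2, e3}. f e = i})"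
  shows "f e1 \<noteq> f e2 \<and> f e1 \<noteq> f e3 \<and> f e2 \<noteq> f e3"
proof -
  have "f e1 = 1 \<or> f e1 = 2 \<or> f e1 = 3" "f e2 = 1 \<or> f e2 = 2 \<or> f e2 = 3"
    "f e3 = 1 \<or> f e3 = 2 \<or> f e3 = 3"
    using assms(4) by auto
  then show ?thesis
    using assms(5) unfolding card_filter_three[OF assms(1-3)] by (elim disjE; simp)
qed

lemma colours_equal_of_parity:
  assumes "e1 \<noteq> e2" "f ` {e1, e2} \<subseteq> {1,2,3::nat}"
    and "\<forall>i \<in> {1,2,3}. even n \<longleftrightarrow> even (card {e \<in> {e1, e2}. f e = i})"
  shows "f e1 = f e2"
proof -
  have "f e1 = 1 \<or> f e1 = 2 \<or> f e1 = 3" "f e2 = 1 \<or> f e2 = 2 \<or> f e2 = 3"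
    using assms(2) by auto
  then show ?thesis
    using assms(3) unfolding card_filter_two[OF assms(1)] by (elim disjE; simp)
qed

lemma inj_on_incident_pullback:
  assumes "proper3 G f" "inj_on h (incident G' w)" "h ` incident G' w \<subseteq> incident G u"
    and "\<forall>a \<in> incident G' w. c a = f (h a)"
  shows "inj_on c (incident G' w)"
proof -
  have "inj_on f (incident G u)"
    using assms(1) by (simp add: proper3_iff_inj_on_incident)
  then have "inj_on f (h ` incident G' w)"
    using assms(3) by (rule inj_on_subset)
  then have "inj_on (f \<circ> h) (incident G' w)"
    using assms(2) by (rule comp_inj_on[rotated])
  then show ?thesis
    using assms(4) inj_on_cong[of "incident G' w" c "f \<circ> h"] by simp
qed

text \<open>In G1 Y G2 the edge y_j of G2 survives as the edge tagged Inl x_j.\<close>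
definition Y_lift :: "'e1 \<Rightarrow> 'e1 \<Rightarrow> 'e1 \<Rightarrow> 'e2 \<Rightarrow> 'e2 \<Rightarrow> 'e2 \<Rightarrow> 'e2 \<Rightarrow> 'e1 + 'e2" where
  "Y_lift x1 x2 x3 y1 y2 y3 b =
    (if b = y1 then Inl x1 else if b = y2 then Inl x2 else if b = y3 then Inl x3 else Inr b)"

lemma Y_data_ends:
  assumes "wf_graph G" "Y_data G v x1 x2 x3" "x \<in> {x1, x2, x3}"
  shows "ends G x = {v, other G x v}" "other G x v \<noteq> v" "other G x v \<in> verts G"
proof -
  have x: "x \<in> edges G" "v \<in> ends G x"
    using assms(2,3) by (auto simp: Y_data_def incident_def)
  then have card: "card (ends G x) = 2" and sub: "ends G x \<subseteq> verts G"
    using assms(1) by (auto simp: wf_graph_def)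
  show ends: "ends G x = {v, other G x v}" and "other G x v \<noteq> v"
    using ends_eq_other[OF card x(2)] by simp_all
  show "other G x v \<in> verts G"
    using ends sub by auto
qed

lemma Y_comp_incident_Inl:
  fixes G1 :: "('v1, 'e1) mgraph" and G2 :: "('v2, 'e2) mgraph"
  assumes "wf_graph G1" "Y_data G1 v1 x1 x2 x3" "w \<noteq> v1"
  shows "Inl ` incident G1 w \<subseteq> incident (Y_comp G1 v1 x1 x2 x3 G2 v2 y1 y2 y3) (Inl w)"
proof
  fix e :: "'e1 + 'e2" assume "e \<in> Inl ` incident G1 w"
  then obtain a where a: "e = Inl a" "a \<in> edges G1" "w \<in> ends G1 a"
    by (auto simp: incident_def)
  show "e \<in> incident (Y_comp G1 v1 x1 x2 x3 G2 v2 y1 y2 y3) (Inl w)"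
  proof (cases "a \<in> {x1, x2, x3}")
    case True
    then have "w = other G1 a v1"
      using Y_data_ends(1)[OF assms(1,2) True] a(3) assms(3) by auto
    then show ?thesis using True a by (auto simp: incident_def Y_comp_def)
  qed (use a in \<open>auto simp: incident_def Y_comp_def\<close>)
qed

lemma Y_comp_incident_Inr:
  fixes G1 :: "('v1, 'e1) mgraph" and G2 :: "('v2, 'e2) mgraph"
  assumes "wf_graph G2" "Y_data G1 v1 x1 x2 x3" "Y_data G2 v2 y1 y2 y3" "w \<noteq> v2"
  shows "Y_lift x1 x2 x3 y1 y2 y3 ` incident G2 w \<subseteq>
    incident (Y_comp G1 v1 x1 x2 x3 G2 v2 y1 y2 y3) (Inr w)"
proof
  fix e assume "e \<in> Y_lift x1 x2 x3 y1 y2 y3 ` incident G2 w"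
  then obtain b where b: "e = Y_lift x1 x2 x3 y1 y2 y3 b" "b \<in> edges G2" "w \<in> ends G2 b"
    by (auto simp: incident_def)
  have x: "x1 \<in> edges G1" "x2 \<in> edges G1" "x3 \<in> edges G1" "x1 \<noteq> x2" "x1 \<noteq> x3" "x2 \<noteq> x3"
    using assms(2) by (auto simp: Y_data_def incident_def)
  show "e \<in> incident (Y_comp G1 v1 x1 x2 x3 G2 v2 y1 y2 y3) (Inr w)"
  proof (cases "b \<in> {y1, y2, y3}")
    case True
    then have "w = other G2 b v2"
      using Y_data_ends(1)[OF assms(1,3) True] b(3) assms(4) by auto
    then show ?thesis using True b x by (auto simp: incident_def Y_comp_def Y_lift_def)
  qed (use b in \<open>auto simp: incident_def Y_comp_def Y_lift_def\<close>)
qed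

lemma inj_Y_lift:
  assumes "x1 \<noteq> x2" "x1 \<noteq> x3" "x2 \<noteq> x3"
  shows "inj (Y_lift x1 x2 x3 y1 y2 y3)"
  using assms by (auto simp: inj_def Y_lift_def split: if_splits)

lemma Y_comp_boundary:
  fixes G1 :: "('v1, 'e1) mgraph" and G2 :: "('v2, 'e2) mgraph"
  assumes "wf_graph G1" "Y_data G1 v1 x1 x2 x3"
  shows "boundary (Y_comp G1 v1 x1 x2 x3 G2 v2 y1 y2 y3) (Inl ` (verts G1 - {v1})) =
    {Inl x1, Inl x2, Inl x3}"
proof -
  let ?G = "Y_comp G1 v1 x1 x2 x3 G2 v2 y1 y2 y3" and ?A = "Inl ` (verts G1 - {v1})"
  have "odd (card (ends ?G e \<inter> ?A)) \<longleftrightarrow> e \<in> {Inl x1, Inl x2, Inl x3}" if "e \<in> edges ?G" for e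
  proof (cases e)
    case (Inl a)
    then have a: "a \<in> edges G1" using that by (auto simp: Y_comp_def)
    show ?thesis
    proof (cases "a \<in> {x1, x2, x3}")
      case True
      then have "ends ?G e \<inter> ?A = {Inl (other G1 a v1)}"
        using Y_data_ends[OF assms True] Inl by (auto simp: Y_comp_def)
      then show ?thesis using Inl True by simp
    next
      case False
      then have "v1 \<notin> ends G1 a"
        using assms(2) a by (auto simp: Y_data_def incident_def)
      moreover have "ends G1 a \<subseteq> verts G1" "card (ends G1 a) = 2"
        using assms(1) a by (auto simp: wf_graph_def)
      ultimately have "ends ?G e \<inter> ?A = Inl ` ends G1 a"
        using False Inl by (auto simp: Y_comp_def)
      then show ?thesis using \<open>card (ends G1 a) = 2\<close> Inl False by (simp add: card_image)
    qed
  next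
    case (Inr b)
    then have "ends ?G e \<inter> ?A = {}" by (auto simp: Y_comp_def)
    then show ?thesis using Inr by simp
  qed
  moreover have "{Inl x1, Inl x2, Inl x3} \<subseteq> edges ?G"
    using assms(2) by (auto simp: Y_data_def incident_def Y_comp_def)
  ultimately show ?thesis by (auto simp: boundary_def)
qed

lemma proper3_Y_comp_merged_edges_distinct:
  fixes G1 :: "('v1, 'e1) mgraph" and G2 :: "('v2, 'e2) mgraph"
  assumes "cubic G1" "wf_graph G2" "Y_data G1 v1 x1 x2 x3"
    and f: "proper3 (Y_comp G1 v1 x1 x2 x3 G2 v2 y1 y2 y3) f"
  shows "f (Inl x1) \<noteq> f (Inl x2) \<and> f (Inl x1) \<noteq> f (Inl x3) \<and> f (Inl x2) \<noteq> f (Inl x3)"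
proof -
  let ?G = "Y_comp G1 v1 x1 x2 x3 G2 v2 y1 y2 y3" and ?A = "Inl ` (verts G1 - {v1}) :: ('v1 + 'v2) set"
  have wf: "wf_graph G1" and deg1: "\<forall>v \<in> verts G1. card (incident G1 v) = 3"
    using assms(1) by (auto simp: cubic_def)
  have fin: "finite (edges ?G)"
    using wf assms(2) by (simp add: wf_graph_def Y_comp_def)
  have deg: "\<forall>v \<in> ?A. 3 \<le> card (incident ?G v)"
  proof
    fix v :: "'v1 + 'v2" assume "v \<in> ?A"
    then obtain u where u: "v = Inl u" "u \<in> verts G1" "u \<noteq> v1" by auto
    have "Inl ` incident G1 u \<subseteq> incident ?G v"
      using Y_comp_incident_Inl[OF wf assms(3) u(3)] u(1) by simp
    then have "card (incident G1 u) \<le> card (incident ?G v)"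
      using fin by (intro card_inj_on_le[of Inl]) (auto simp: incident_def)
    then show "3 \<le> card (incident ?G v)" using deg1 u(2) by simp
  qed
  have "finite ?A"
    using wf by (simp add: wf_graph_def)
  then have "\<forall>i \<in> {1,2,3}. even (card ?A) \<longleftrightarrow> even (card {e \<in> boundary ?G ?A. f e = i})"
    by (rule even_card_iff_even_boundary_colour_classes[OF fin _ f deg])
  then have parity:
      "\<forall>i \<in> {1,2,3}. even (card ?A) \<longleftrightarrow> even (card {e \<in> {Inl x1, Inl x2, Inl x3}. f e = i})"
    unfolding Y_comp_boundary[OF wf assms(3)] .
  have "{Inl x1, Inl x2, Inl x3} \<subseteq> edges ?G"
    using assms(3) by (auto simp: Y_data_def incident_def Y_comp_def)
  then have "f ` {Inl x1, Inl x2, Inl x3} \<subseteq> {1,2,3}"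
    using f by (auto simp: proper3_def)
  moreover have "x1 \<noteq> x2" "x1 \<noteq> x3" "x2 \<noteq> x3"
    using assms(3) by (auto simp: Y_data_def)
  ultimately show ?thesis
    using colours_distinct_of_parity[OF _ _ _ _ parity] by simp
qed

lemma proper3_Y_comp_restrict_left:
  assumes "wf_graph G1" "Y_data G1 v1 x1 x2 x3"
    and f: "proper3 (Y_comp G1 v1 x1 x2 x3 G2 v2 y1 y2 y3) f"
    and distinct: "f (Inl x1) \<noteq> f (Inl x2) \<and> f (Inl x1) \<noteq> f (Inl x3) \<and> f (Inl x2) \<noteq> f (Inl x3)"
  shows "proper3 G1 (\<lambda>a. f (Inl a))"
  unfolding proper3_iff_inj_on_incident
proof (intro conjI allI ballI)
  show "f (Inl a) \<in> {1,2,3}" if "a \<in> edges G1" for a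
    using that f by (simp add: proper3_def Y_comp_def)
  show "inj_on (\<lambda>a. f (Inl a)) (incident G1 w)" for w
  proof (cases "w = v1")
    case True
    then show ?thesis using assms(2) distinct by (auto simp: Y_data_def)
  next
    case False
    show ?thesis
      by (rule inj_on_incident_pullback[OF f _ Y_comp_incident_Inl[OF assms(1,2) False]]) simp_all
  qed
qed

lemma proper3_Y_comp_restrict_right:
  assumes "wf_graph G2" "Y_data G1 v1 x1 x2 x3" "Y_data G2 v2 y1 y2 y3"
    and f: "proper3 (Y_comp G1 v1 x1 x2 x3 G2 v2 y1 y2 y3) f"
    and distinct: "f (Inl x1) \<noteq> f (Inl x2) \<and> f (Inl x1) \<noteq> f (Inl x3) \<and> f (Inl x2) \<noteq> f (Inl x3)"
  shows "proper3 G2 (\<lambda>b. f (Y_lift x1 x2 x3 y1 y2 y3 b))"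
  unfolding proper3_iff_inj_on_incident
proof (intro conjI allI ballI)
  have x: "x1 \<in> edges G1" "x2 \<in> edges G1" "x3 \<in> edges G1"
    using assms(2) by (auto simp: Y_data_def incident_def)
  show "f (Y_lift x1 x2 x3 y1 y2 y3 b) \<in> {1,2,3}" if "b \<in> edges G2" for b
    using that f x by (auto simp: proper3_def Y_lift_def Y_comp_def)
  have dist: "x1 \<noteq> x2" "x1 \<noteq> x3" "x2 \<noteq> x3" "y1 \<noteq> y2" "y1 \<noteq> y3" "y2 \<noteq> y3"
    using assms(2,3) by (auto simp: Y_data_def)
  show "inj_on (\<lambda>b. f (Y_lift x1 x2 x3 y1 y2 y3 b)) (incident G2 w)" for w
  proof (cases "w = v2")
    case True
    then show ?thesis using assms(3) distinct dist by (auto simp: Y_data_def Y_lift_def)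
  next
    case False
    show ?thesis
      by (rule inj_on_incident_pullback[OF f _ Y_comp_incident_Inr[OF assms(1-3) False]])
        (simp_all add: inj_on_subset[OF inj_Y_lift[OF dist(1-3)]])
  qed
qed

lemma proper3_Y_comp_decomposes:
  assumes "cubic G1" "cubic G2" "Y_data G1 v1 x1 x2 x3" "Y_data G2 v2 y1 y2 y3"
    and f: "proper3 (Y_comp G1 v1 x1 x2 x3 G2 v2 y1 y2 y3) f"
  shows "\<exists>c d. proper3 G1 c \<and> proper3 G2 d \<and> is_Y_coloring G1 v1 x1 x2 x3 G2 v2 y1 y2 y3 c d f"
proof -
  have wf: "wf_graph G1" "wf_graph G2"
    using assms(1,2) by (auto simp: cubic_def)
  have distinct: "f (Inl x1) \<noteq> f (Inl x2) \<and> f (Inl x1) \<noteq> f (Inl x3) \<and> f (Inl x2) \<noteq> f (Inl x3)"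
    by (rule proper3_Y_comp_merged_edges_distinct[OF assms(1) wf(2) assms(3) f])
  have "y1 \<noteq> y2" "y1 \<noteq> y3" "y2 \<noteq> y3"
    using assms(4) by (auto simp: Y_data_def)
  then have "is_Y_coloring G1 v1 x1 x2 x3 G2 v2 y1 y2 y3 (\<lambda>a. f (Inl a))
      (\<lambda>b. f (Y_lift x1 x2 x3 y1 y2 y3 b)) f"
    unfolding is_Y_coloring_def
    by (intro exI[of _ id]) (auto simp: Y_lift_def Y_comp_def split: sum.split)
  then show ?thesis
    using proper3_Y_comp_restrict_left[OF wf(1) assms(3) f distinct]
      proper3_Y_comp_restrict_right[OF wf(2) assms(3,4) f distinct] by blast
qed

text \<open>The edge of G1 H G2 that stands in for an edge of G1 (resp. G2) at its end u: the
  deleted edge x is replaced by Inl x at s11 and by Inr y at s12 (y by Inl x at s21 and by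
  Inr y at s22).\<close>
definition H_lift1 :: "'e1 \<Rightarrow> 'v1 \<Rightarrow> 'e2 \<Rightarrow> 'v1 \<Rightarrow> 'e1 \<Rightarrow> 'e1 + 'e2" where
  "H_lift1 x s12 y u a = (if a = x \<and> u = s12 then Inr y else Inl a)"

definition H_lift2 :: "'e1 \<Rightarrow> 'e2 \<Rightarrow> 'v2 \<Rightarrow> 'v2 \<Rightarrow> 'e2 \<Rightarrow> 'e1 + 'e2" where
  "H_lift2 x y s21 u b = (if b = y \<and> u = s21 then Inl x else Inr b)"

lemma inj_H_lift1: "inj (H_lift1 x s12 y u)"
  by (auto simp: inj_def H_lift1_def)

lemma inj_H_lift2: "inj (H_lift2 x y s21 u)"
  by (auto simp: inj_def H_lift2_def)

lemma H_comp_incident_Inl: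
  assumes "H_data G1 x s11 s12" "H_data G2 y s21 s22"
  shows "H_lift1 x s12 y u ` incident G1 u \<subseteq> incident (H_comp G1 x s11 s12 G2 y s21 s22) (Inl u)"
  using assms by (auto simp: H_data_def H_lift1_def incident_def H_comp_def)

lemma H_comp_incident_Inr:
  assumes "H_data G1 x s11 s12" "H_data G2 y s21 s22"
  shows "H_lift2 x y s21 u ` incident G2 u \<subseteq> incident (H_comp G1 x s11 s12 G2 y s21 s22) (Inr u)"
  using assms by (auto simp: H_data_def H_lift2_def incident_def H_comp_def)

lemma H_comp_boundary:
  fixes G1 :: "('v1, 'e1) mgraph" and G2 :: "('v2, 'e2) mgraph"
  assumes "wf_graph G1" "H_data G1 x s11 s12" "H_data G2 y s21 s22"
  shows "boundary (H_comp G1 x s11 s12 G2 y s21 s22) (Inl ` verts G1) = {Inl x, Inr y}"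
proof -
  let ?G = "H_comp G1 x s11 s12 G2 y s21 s22" and ?A = "Inl ` verts G1 :: ('v1 + 'v2) set"
  have x: "x \<in> edges G1" "ends G1 x = {s11, s12}" and y: "y \<in> edges G2"
    using assms(2,3) by (auto simp: H_data_def)
  then have s: "s11 \<in> verts G1" "s12 \<in> verts G1"
    using assms(1) by (auto simp: wf_graph_def)
  have "odd (card (ends ?G e \<inter> ?A)) \<longleftrightarrow> e \<in> {Inl x, Inr y}" if "e \<in> edges ?G" for e
  proof (cases e)
    case (Inl a)
    show ?thesis
    proof (cases "a = x")
      case True
      then have "ends ?G e \<inter> ?A = {Inl s11}" using s Inl by (auto simp: H_comp_def)
      then show ?thesis using Inl True by simp
    next
      case False
      have "a \<in> edges G1" using that Inl by (auto simp: H_comp_def)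
      then have "ends G1 a \<subseteq> verts G1" "card (ends G1 a) = 2"
        using assms(1) by (auto simp: wf_graph_def)
      then have "card (ends ?G e \<inter> ?A) = 2"
        using False Inl by (simp add: H_comp_def Int_absorb2 image_mono card_image)
      then show ?thesis using Inl False by simp
    qed
  next
    case (Inr b)
    then have "ends ?G e \<inter> ?A = (if b = y then {Inl s12} else {})"
      using s by (auto simp: H_comp_def)
    then show ?thesis using Inr by simp
  qed
  moreover have "{Inl x, Inr y} \<subseteq> edges ?G"
    using x y by (auto simp: H_comp_def)
  ultimately show ?thesis by (auto simp: boundary_def)
qed

lemma proper3_H_comp_new_edges_same_colour:
  fixes G1 :: "('v1, 'e1) mgraph" and G2 :: "('v2, 'e2) mgraph"
  assumes "cubic G1" "wf_graph G2" "H_data G1 x s11 s12" "H_data G2 y s21 s22"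
    and f: "proper3 (H_comp G1 x s11 s12 G2 y s21 s22) f"
  shows "f (Inl x) = f (Inr y)"
proof -
  let ?G = "H_comp G1 x s11 s12 G2 y s21 s22" and ?A = "Inl ` verts G1 :: ('v1 + 'v2) set"
  have wf: "wf_graph G1" and deg1: "\<forall>v \<in> verts G1. card (incident G1 v) = 3"
    using assms(1) by (auto simp: cubic_def)
  have fin: "finite (edges ?G)"
    using wf assms(2) by (simp add: wf_graph_def H_comp_def)
  have deg: "\<forall>v \<in> ?A. 3 \<le> card (incident ?G v)"
  proof
    fix v :: "'v1 + 'v2" assume "v \<in> ?A"
    then obtain u where u: "v = Inl u" "u \<in> verts G1" by auto
    have "card (incident G1 u) \<le> card (incident ?G v)"
      using H_comp_incident_Inl[OF assms(3,4), of u] u(1) fin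
      by (intro card_inj_on_le[OF inj_on_subset[OF inj_H_lift1]]) (auto simp: incident_def)
    then show "3 \<le> card (incident ?G v)" using deg1 u(2) by simp
  qed
  have "finite ?A"
    using wf by (simp add: wf_graph_def)
  then have "\<forall>i \<in> {1,2,3}. even (card ?A) \<longleftrightarrow> even (card {e \<in> boundary ?G ?A. f e = i})"
    by (rule even_card_iff_even_boundary_colour_classes[OF fin _ f deg])
  then have parity:
      "\<forall>i \<in> {1,2,3}. even (card ?A) \<longleftrightarrow> even (card {e \<in> {Inl x, Inr y}. f e = i})"
    unfolding H_comp_boundary[OF wf assms(3,4)] .
  have "{Inl x, Inr y} \<subseteq> edges ?G"
    using assms(3,4) by (auto simp: H_data_def H_comp_def)
  then have "f ` {Inl x, Inr y} \<subseteq> {1,2,3}"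
    using f by (auto simp: proper3_def)
  then show ?thesis
    using colours_equal_of_parity[OF _ _ parity] by simp
qed

lemma proper3_H_comp_restrict_left:
  assumes "H_data G1 x s11 s12" "H_data G2 y s21 s22"
    and f: "proper3 (H_comp G1 x s11 s12 G2 y s21 s22) f" and same: "f (Inl x) = f (Inr y)"
  shows "proper3 G1 (\<lambda>a. f (Inl a))"
  unfolding proper3_iff_inj_on_incident
proof (intro conjI allI ballI)
  show "f (Inl a) \<in> {1,2,3}" if "a \<in> edges G1" for a
    using that f by (simp add: proper3_def H_comp_def)
  show "inj_on (\<lambda>a. f (Inl a)) (incident G1 w)" for w
    by (rule inj_on_incident_pullback[OF f _ H_comp_incident_Inl[OF assms(1,2)]])
      (simp_all add: inj_on_subset[OF inj_H_lift1] H_lift1_def same)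
qed

lemma proper3_H_comp_restrict_right:
  assumes "H_data G1 x s11 s12" "H_data G2 y s21 s22"
    and f: "proper3 (H_comp G1 x s11 s12 G2 y s21 s22) f" and same: "f (Inl x) = f (Inr y)"
  shows "proper3 G2 (\<lambda>b. f (Inr b))"
  unfolding proper3_iff_inj_on_incident
proof (intro conjI allI ballI)
  show "f (Inr b) \<in> {1,2,3}" if "b \<in> edges G2" for b
    using that f by (simp add: proper3_def H_comp_def)
  show "inj_on (\<lambda>b. f (Inr b)) (incident G2 w)" for w
    by (rule inj_on_incident_pullback[OF f _ H_comp_incident_Inr[OF assms(1,2)]])
      (simp_all add: inj_on_subset[OF inj_H_lift2] H_lift2_def same)
qed

lemma proper3_H_comp_decomposes:
  assumes "cubic G1" "cubic G2" "H_data G1 x s11 s12" "H_data G2 y s21 s22"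
    and f: "proper3 (H_comp G1 x s11 s12 G2 y s21 s22) f"
  shows "\<exists>c d. proper3 G1 c \<and> proper3 G2 d \<and> is_H_coloring G1 x s11 s12 G2 y s21 s22 c d f"
proof -
  have "wf_graph G2"
    using assms(2) by (simp add: cubic_def)
  then have same: "f (Inl x) = f (Inr y)"
    by (rule proper3_H_comp_new_edges_same_colour[OF assms(1) _ assms(3,4) f])
  then have "is_H_coloring G1 x s11 s12 G2 y s21 s22 (\<lambda>a. f (Inl a)) (\<lambda>b. f (Inr b)) f"
    unfolding is_H_coloring_def by (intro exI[of _ id]) (auto split: sum.split)
  then show ?thesis
    using proper3_H_comp_restrict_left[OF assms(3,4) f same]
      proper3_H_comp_restrict_right[OF assms(3,4) f same] by blast
qed

theorem theorem8:
  fixes G1 :: "('v1, 'e1) mgraph" and G2 :: "('v2, 'e2) mgraph"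
  assumes "cubic G1" and "cubic G2"
  shows "(\<forall>v1 x1 x2 x3 v2 y1 y2 y3.
            Y_data G1 v1 x1 x2 x3 \<and> Y_data G2 v2 y1 y2 y3 \<longrightarrow>
            (\<forall>f. proper3 (Y_comp G1 v1 x1 x2 x3 G2 v2 y1 y2 y3) f \<longrightarrow>
               (\<exists>c d. proper3 G1 c \<and> proper3 G2 d \<and>
                  is_Y_coloring G1 v1 x1 x2 x3 G2 v2 y1 y2 y3 c d f)))
       \<and> (\<forall>x s11 s12 y s21 s22.
            H_data G1 x s11 s12 \<and> H_data G2 y s21 s22 \<longrightarrow>
            (\<forall>f. proper3 (H_comp G1 x s11 s12 G2 y s21 s22) f \<longrightarrow>
               (\<exists>c d. proper3 G1 c \<and> proper3 G2 d \<and>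
                  is_H_coloring G1 x s11 s12 G2 y s21 s22 c d f)))"
  using proper3_Y_comp_decomposes[OF assms] proper3_H_comp_decomposes[OF assms] by blast

end
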